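(* Let $n\ge 2$, $b>0$, and let $p_0,\dots,p_{n-2}$ be complex-valued, $C^\infty$, $b$-periodic functions on $\mathbb{R}$; let $\mathcal{L}u := u^{(n)}+\sum_{k=0}^{n-2}p_k(x)u^{(k)}$. Consider the multipoint eigenvalue problem $$\mathcal{L}u=\lambda u,\qquad u(0)=u(b)=u(2b)=\cdots=u((n-1)b)=0 .$$ Let $\mu$ be an eigenvalue of this problem (i.e. it has a nontrivial solution for $\lambda=\mu$) and let $\mathcal{D}_\mu$ be the vector space of its solutions for $\lambda=\mu$ (the eigenspace). Then $\mathcal{D}_\mu$ has a basis consisting of Floquet solutions (pure, i.e. of rank $1$, and possibly generalized, i.e. of rank $\ge 2$) of $\mathcal{L}u=\mu u$. Moreover, if a Floquet solution $\psi^l$ of rank $l\ge 2$ associated to a multiplier $r$ belongs to $\mathcal{D}_\mu$, then the Floquet solution $\psi^{l-1}$ of rank $l-1$ associated to $r$ for which $\psi^l(x+b)=r\psi^l(x)+\psi^{l-1}(x)$ for all $x$ also belongs to $\mathcal{D}_\mu$.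
   Context: Floquet solutions (for fixed $\lambda$): a nontrivial solution $u^1$ of $\mathcal{L}u=\lambda u$ with $u^1(x+b)=r\,u^1(x)$ for all $x\in\mathbb{R}$ is a (pure) Floquet solution of rank $1$ associated to the multiplier $r$. For $l\ge 2$, a solution $u^l$ of $\mathcal{L}u=\lambda u$ is a (generalized) Floquet solution of rank $l$ associated to $r$ if there is a Floquet solution $u^{l-1}$ of rank $l-1$ associated to $r$ such that $u^l(x+b)=r\,u^l(x)+u^{l-1}(x)$ for all $x\in\mathbb{R}$. The multipliers $r$ are the eigenvalues of the map $f(x)\mapsto f(x+b)$ on the $n$-dimensional solution space of $\mathcal{L}u=\lambda u$. *)

theory Defs
  imports "HOL-Analysis.Analysis"
begin

fun vdiff :: "nat \<Rightarrow> (real \<Rightarrow> complex) \<Rightarrow> real \<Rightarrow> complex" where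
  "vdiff 0 f = f"
| "vdiff (Suc k) f = (\<lambda>x. vector_derivative (vdiff k f) (at x))"

definition smooth_fun :: "(real \<Rightarrow> complex) \<Rightarrow> bool" where
  "smooth_fun f \<longleftrightarrow> (\<forall>k x. vdiff k f differentiable (at x))"

definition is_sol :: "nat \<Rightarrow> (nat \<Rightarrow> real \<Rightarrow> complex) \<Rightarrow> complex \<Rightarrow> (real \<Rightarrow> complex) \<Rightarrow> bool" where
  "is_sol n p lam u \<longleftrightarrow>
     (\<forall>k<n. \<forall>x. vdiff k u differentiable (at x)) \<and>
     (\<forall>x. vdiff n u x + (\<Sum>k\<le>n-2. p k x * vdiff k u x) = lam * u x)"

inductive floquet :: "nat \<Rightarrow> (nat \<Rightarrow> real \<Rightarrow> complex) \<Rightarrow> real \<Rightarrow> complex \<Rightarrow> complex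
    \<Rightarrow> nat \<Rightarrow> (real \<Rightarrow> complex) \<Rightarrow> bool"
  for n p b lam r where
  rank1: "\<lbrakk>is_sol n p lam u; u \<noteq> (\<lambda>x. 0); \<forall>x. u (x + b) = r * u x\<rbrakk>
          \<Longrightarrow> floquet n p b lam r 1 u"
| rankSuc: "\<lbrakk>is_sol n p lam u; floquet n p b lam r l v; l \<ge> 1;
             \<forall>x. u (x + b) = r * u x + v x\<rbrakk>
          \<Longrightarrow> floquet n p b lam r (Suc l) u"

definition eigspace :: "nat \<Rightarrow> (nat \<Rightarrow> real \<Rightarrow> complex) \<Rightarrow> real \<Rightarrow> complex \<Rightarrow> (real \<Rightarrow> complex) set" where
  "eigspace n p b lam = {u. is_sol n p lam u \<and> (\<forall>j<n. u (real j * b) = 0)}"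

end

theory Submission
  imports Defs "HOL-Library.Function_Algebras" "HOL-Computational_Algebra.Polynomial_Factorial"
    "HOL-Computational_Algebra.Field_as_Ring" "HOL-Computational_Algebra.Fundamental_Theorem_Algebra"
begin

text \<open>Let \<open>T\<close> be the shift \<open>(T w) x = w (x + b)\<close>. Periodicity of the coefficients makes \<open>T\<close> act on
  the \<open>n\<close>-dimensional solution space of \<open>L u = \<mu> u\<close>, so every solution is killed by a nonzero
  polynomial in \<open>T\<close> of degree at most \<open>n\<close>. For the values \<open>u(kb)\<close> such a relation is a linear
  recurrence of order at most \<open>n\<close>, which propagates the boundary conditions
  \<open>u(0) = \<dots> = u((n-1)b) = 0\<close> to every lattice point \<open>kb\<close>; hence the eigenspace \<open>D\<^sub>\<mu>\<close> is
  \<open>T\<close>-invariant. By the primary decomposition, \<open>D\<^sub>\<mu>\<close> is spanned by the root vectors of \<open>T\<close>, the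
  solutions with \<open>(T - r)\<^sup>k u = 0\<close>, and these are exactly the Floquet solutions. The predecessor
  of a Floquet solution \<open>\<psi>\<close> is \<open>(T - r) \<psi>\<close>, which lies in \<open>D\<^sub>\<mu>\<close> by invariance.\<close>

text \<open>\<open>poly_shift b q w\<close> is \<open>q(T) w\<close>.\<close>

definition poly_shift :: "real \<Rightarrow> complex poly \<Rightarrow> (real \<Rightarrow> complex) \<Rightarrow> real \<Rightarrow> complex" where
  "poly_shift b q w = (\<lambda>x. \<Sum>i\<le>degree q. coeff q i * w (x + real i * b))"

lemma poly_shift_eq_sum:
  assumes "degree q \<le> N"
  shows "poly_shift b q w x = (\<Sum>i\<le>N. coeff q i * w (x + real i * b))"
  unfolding poly_shift_def
  by (rule sum.mono_neutral_left) (use assms in \<open>auto simp: coeff_eq_0\<close>)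

lemma poly_shift_add: "poly_shift b (q1 + q2) w x = poly_shift b q1 w x + poly_shift b q2 w x"
proof -
  let ?N = "max (degree q1) (degree q2)"
  have "degree (q1 + q2) \<le> ?N"
    by (metis degree_add_le max.cobounded1 max.cobounded2)
  then show ?thesis
    by (simp add: poly_shift_eq_sum[of _ ?N] sum.distrib distrib_right)
qed

lemma poly_shift_smult: "poly_shift b (smult a q) w x = a * poly_shift b q w x"
  by (simp add: poly_shift_eq_sum[of _ "degree q"] sum_distrib_left mult.assoc)

lemma poly_shift_const: "poly_shift b [:a:] w x = a * w x"
  by (simp add: poly_shift_def)

lemma poly_shift_pCons_0: "poly_shift b (pCons 0 q) w x = poly_shift b q w (x + b)"
proof -
  have "poly_shift b (pCons 0 q) w x
      = (\<Sum>i\<le>Suc (degree q). coeff (pCons 0 q) i * w (x + real i * b))"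
    by (rule poly_shift_eq_sum) (simp add: degree_pCons_le)
  also have "\<dots> = (\<Sum>i\<le>degree q. coeff q i * w (x + real (Suc i) * b))"
    by (subst sum.atMost_Suc_shift) simp
  also have "\<dots> = poly_shift b q w (x + b)"
    by (simp add: poly_shift_def algebra_simps)
  finally show ?thesis .
qed

lemma poly_shift_0 [simp]: "poly_shift b 0 w = (\<lambda>x. 0)"
  by (simp add: poly_shift_def fun_eq_iff)

lemma poly_shift_1 [simp]: "poly_shift b 1 w = w"
  by (simp add: poly_shift_def fun_eq_iff one_pCons)

lemma poly_shift_zero_fun [simp]: "poly_shift b q (\<lambda>x. 0) = (\<lambda>x. 0)"
  by (simp add: poly_shift_def fun_eq_iff)

lemma poly_shift_linear: "poly_shift b [:-r, 1:] w x = w (x + b) - r * w x"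
  by (simp add: poly_shift_def)

lemma poly_shift_mult: "poly_shift b (q1 * q2) w = poly_shift b q1 (poly_shift b q2 w)"
proof (induction q1 rule: pCons_induct)
  case 0
  then show ?case by simp
next
  case (pCons a q1)
  have split: "pCons a q1 = [:a:] + pCons 0 q1" by simp
  show ?case
  proof
    fix x
    have "poly_shift b (pCons a q1 * q2) w x = poly_shift b (smult a q2 + pCons 0 (q1 * q2)) w x"
      by simp
    also have "\<dots> = a * poly_shift b q2 w x + poly_shift b q1 (poly_shift b q2 w) (x + b)"
      by (simp add: poly_shift_add poly_shift_smult poly_shift_pCons_0 pCons.IH)
    also have "\<dots> = poly_shift b (pCons a q1) (poly_shift b q2 w) x"
      by (subst split, simp only: poly_shift_add poly_shift_const poly_shift_pCons_0)
    finally show "poly_shift b (pCons a q1 * q2) w x = poly_shift b (pCons a q1) (poly_shift b q2 w) x" .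
  qed
qed

lemma vdiff_sum:
  assumes "finite I" "\<And>i j x. i \<in> I \<Longrightarrow> j < k \<Longrightarrow> vdiff j (f i) differentiable (at x)"
  shows "vdiff k (\<lambda>x. \<Sum>i\<in>I. c i * f i x) = (\<lambda>x. \<Sum>i\<in>I. c i * vdiff k (f i) x)"
  using assms(2)
proof (induction k)
  case 0
  then show ?case by simp
next
  case (Suc k)
  show ?case
  proof
    fix x
    have "((\<lambda>x. \<Sum>i\<in>I. c i * vdiff k (f i) x) has_vector_derivative
           (\<Sum>i\<in>I. c i * vdiff (Suc k) (f i) x)) (at x)"
      using Suc.prems
      by (intro has_vector_derivative_sum has_vector_derivative_mult_right)
        (auto intro!: vector_derivative_works[THEN iffD1])
    then show "vdiff (Suc k) (\<lambda>x. \<Sum>i\<in>I. c i * f i x) x = (\<Sum>i\<in>I. c i * vdiff (Suc k) (f i) x)"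
      using Suc by (simp add: vector_derivative_at)
  qed
qed

lemma vdiff_sum_differentiable:
  assumes "finite I" "\<And>i j x. i \<in> I \<Longrightarrow> j < k \<Longrightarrow> vdiff j (f i) differentiable (at x)" "j < k"
  shows "vdiff j (\<lambda>x. \<Sum>i\<in>I. c i * f i x) differentiable (at x)"
proof -
  have "((\<lambda>x. \<Sum>i\<in>I. c i * vdiff j (f i) x) has_vector_derivative
           (\<Sum>i\<in>I. c i * vdiff (Suc j) (f i) x)) (at x)"
    using assms
    by (intro has_vector_derivative_sum has_vector_derivative_mult_right)
      (auto intro!: vector_derivative_works[THEN iffD1])
  then show ?thesis
    using vdiff_sum[OF assms(1), of j f c] assms(2,3)
    by (auto intro: differentiableI_vector)
qed

lemma vdiff_shift:
  assumes "\<And>j x. j < k \<Longrightarrow> vdiff j u differentiable (at x)"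
  shows "vdiff k (\<lambda>x. u (x + s)) = (\<lambda>x. vdiff k u (x + s))"
  using assms
proof (induction k)
  case 0
  then show ?case by simp
next
  case (Suc k)
  show ?case
  proof
    fix x
    have "(vdiff k u has_vector_derivative vdiff (Suc k) u (x + s)) (at (x + s))"
      using Suc.prems by (auto intro!: vector_derivative_works[THEN iffD1])
    moreover have "((\<lambda>x. x + s) has_vector_derivative 1) (at x)"
      by (auto intro!: derivative_eq_intros simp flip: has_real_derivative_iff_has_vector_derivative)
    ultimately have "((\<lambda>x. vdiff k u (x + s)) has_vector_derivative vdiff (Suc k) u (x + s)) (at x)"
      using vector_diff_chain_at by (fastforce simp: o_def)
    then show "vdiff (Suc k) (\<lambda>x. u (x + s)) x = vdiff (Suc k) u (x + s)"
      using Suc by (simp add: vector_derivative_at)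
  qed
qed

lemma is_sol_sum:
  assumes "finite I" "\<And>i. i \<in> I \<Longrightarrow> is_sol n p lam (f i)"
  shows "is_sol n p lam (\<lambda>x. \<Sum>i\<in>I. c i * f i x)"
proof -
  have diff: "\<And>i j x. i \<in> I \<Longrightarrow> j < n \<Longrightarrow> vdiff j (f i) differentiable (at x)"
    using assms(2) by (auto simp: is_sol_def)
  have vd: "vdiff k (\<lambda>x. \<Sum>i\<in>I. c i * f i x) = (\<lambda>x. \<Sum>i\<in>I. c i * vdiff k (f i) x)"
    if "k \<le> n" for k
    by (rule vdiff_sum) (use assms(1) diff that in auto)
  have eq: "vdiff n (f i) x + (\<Sum>k\<le>n-2. p k x * vdiff k (f i) x) = lam * f i x" if "i \<in> I" for i x
    using assms(2)[OF that] by (auto simp: is_sol_def)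
  show ?thesis
    unfolding is_sol_def
  proof (intro conjI allI impI)
    fix k x assume "k < n"
    then show "vdiff k (\<lambda>x. \<Sum>i\<in>I. c i * f i x) differentiable (at x)"
      using vdiff_sum_differentiable[OF assms(1) diff] by auto
  next
    fix x
    have "vdiff n (\<lambda>x. \<Sum>i\<in>I. c i * f i x) x
          + (\<Sum>k\<le>n-2. p k x * vdiff k (\<lambda>x. \<Sum>i\<in>I. c i * f i x) x)
        = (\<Sum>i\<in>I. c i * (vdiff n (f i) x + (\<Sum>k\<le>n-2. p k x * vdiff k (f i) x)))"
      by (simp add: vd sum_distrib_left sum.distrib algebra_simps sum.swap[of _ "{..n-2}"])
    also have "\<dots> = lam * (\<Sum>i\<in>I. c i * f i x)"
      by (simp add: eq sum_distrib_left algebra_simps)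
    finally show "vdiff n (\<lambda>x. \<Sum>i\<in>I. c i * f i x) x
          + (\<Sum>k\<le>n-2. p k x * vdiff k (\<lambda>x. \<Sum>i\<in>I. c i * f i x) x) = lam * (\<Sum>i\<in>I. c i * f i x)" .
  qed
qed

lemma is_sol_shift:
  assumes "is_sol n p lam u" "\<And>k x. k \<le> n - 2 \<Longrightarrow> p k (x + s) = p k x"
  shows "is_sol n p lam (\<lambda>x. u (x + s))"
proof -
  have diff: "\<And>j x. j < n \<Longrightarrow> vdiff j u differentiable (at x)"
    using assms(1) by (auto simp: is_sol_def)
  have vd: "vdiff k (\<lambda>x. u (x + s)) = (\<lambda>x. vdiff k u (x + s))" if "k \<le> n" for k
    by (rule vdiff_shift) (use diff that in auto)
  show ?thesis
    unfolding is_sol_def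
  proof (intro conjI allI impI)
    fix k x assume k: "k < n"
    have "((\<lambda>x. x + s) has_vector_derivative 1) (at x)"
      by (auto intro!: derivative_eq_intros simp flip: has_real_derivative_iff_has_vector_derivative)
    moreover have "(vdiff k u has_vector_derivative vdiff (Suc k) u (x + s)) (at (x + s))"
      using diff k by (auto intro!: vector_derivative_works[THEN iffD1])
    ultimately have "((\<lambda>x. vdiff k u (x + s)) has_vector_derivative vdiff (Suc k) u (x + s)) (at x)"
      using vector_diff_chain_at by (fastforce simp: o_def)
    then show "vdiff k (\<lambda>x. u (x + s)) differentiable (at x)"
      using vd[of k] k by (auto intro: differentiableI_vector)
  next
    fix x
    have "(\<Sum>k\<le>n - 2. p k x * vdiff k (\<lambda>x. u (x + s)) x) = (\<Sum>k\<le>n - 2. p k (x + s) * vdiff k u (x + s))"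
      using assms(2) vd by (intro sum.cong) auto
    then show "vdiff n (\<lambda>x. u (x + s)) x + (\<Sum>k\<le>n - 2. p k x * vdiff k (\<lambda>x. u (x + s)) x) = lam * u (x + s)"
      using assms(1) vd[of n] unfolding is_sol_def by auto
  qed
qed

lemma periodic_shift_multiple:
  assumes "\<And>x. f (x + b) = f x"
  shows "f (x + real i * b) = f x"
proof (induction i)
  case 0
  then show ?case by simp
next
  case (Suc i)
  have "f (x + real (Suc i) * b) = f ((x + real i * b) + b)" by (simp add: algebra_simps)
  then show ?case using assms Suc by simp
qed

lemma is_sol_poly_shift:
  assumes "is_sol n p lam u" "\<And>k x. k \<le> n - 2 \<Longrightarrow> p k (x + b) = p k x"
  shows "is_sol n p lam (poly_shift b q u)"
  unfolding poly_shift_def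
  using assms by (intro is_sol_sum is_sol_shift periodic_shift_multiple) auto

lemma gronwall_zero_right:
  fixes E E' :: "real \<Rightarrow> real"
  assumes nonneg: "\<And>t. E t \<ge> 0" and E0: "E 0 = 0" and "0 \<le> x"
    and deriv: "\<And>t. 0 \<le> t \<Longrightarrow> t \<le> x \<Longrightarrow> DERIV E t :> E' t"
    and bound: "\<And>t. 0 \<le> t \<Longrightarrow> t \<le> x \<Longrightarrow> E' t \<le> C * E t"
  shows "E x = 0"
proof -
  define F where "F t = E t * exp (- C * t)" for t
  have "F x \<le> F 0"
  proof (rule DERIV_nonpos_imp_nonincreasing[OF \<open>0 \<le> x\<close>])
    fix t assume t: "0 \<le> t" "t \<le> x"
    have "DERIV F t :> (E' t - C * E t) * exp (- C * t)"
      unfolding F_def using deriv[OF t] by (auto intro!: derivative_eq_intros simp: algebra_simps)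
    moreover have "(E' t - C * E t) * exp (- C * t) \<le> 0"
      using bound[OF t] by (simp add: mult_nonpos_nonneg)
    ultimately show "\<exists>y. DERIV F t :> y \<and> y \<le> 0" by blast
  qed
  then have "E x \<le> 0" using E0 by (simp add: F_def mult_le_0_iff)
  then show ?thesis using nonneg by (meson antisym)
qed

lemma gronwall_zero:
  fixes E E' :: "real \<Rightarrow> real"
  assumes nonneg: "\<And>t. E t \<ge> 0" and E0: "E 0 = 0" and deriv: "\<And>t. DERIV E t :> E' t"
    and bound: "\<And>t. t \<in> {-R..R} \<Longrightarrow> \<bar>E' t\<bar> \<le> C * E t" and x: "x \<in> {-R..R}"
  shows "E x = 0"
proof (cases "0 \<le> x")
  case True
  show ?thesis
  proof (rule gronwall_zero_right[of E x E' C])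
    fix t assume "0 \<le> t" "t \<le> x"
    then show "E' t \<le> C * E t" using bound[of t] x by auto
  qed (use True nonneg E0 deriv in auto)
next
  case False
  have "E (- (- x)) = 0"
  proof (rule gronwall_zero_right[of "\<lambda>t. E (- t)" "- x" "\<lambda>t. - E' (- t)" C])
    fix t
    show "DERIV (\<lambda>t. E (- t)) t :> - E' (- t)"
      using DERIV_chain2[OF deriv DERIV_minus[OF DERIV_ident]] by simp
    assume "0 \<le> t" "t \<le> - x"
    then show "- E' (- t) \<le> C * E (- t)" using bound[of "- t"] x by auto
  qed (use False nonneg E0 in auto)
  then show ?thesis by simp
qed

definition energy :: "nat \<Rightarrow> (real \<Rightarrow> complex) \<Rightarrow> real \<Rightarrow> real" where
  "energy n u x = (\<Sum>k<n. (norm (vdiff k u x))\<^sup>2)"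

lemma energy_has_derivative:
  assumes "\<And>k x. k < n \<Longrightarrow> vdiff k u differentiable (at x)"
  shows "DERIV (energy n u) x :> (\<Sum>k<n. 2 * inner (vdiff k u x) (vdiff (Suc k) u x))"
  unfolding energy_def power2_norm_eq_inner
proof (rule DERIV_sum)
  fix k assume "k \<in> {..<n}"
  then have "(vdiff k u has_vector_derivative vdiff (Suc k) u x) (at x)"
    using assms by (auto intro!: vector_derivative_works[THEN iffD1])
  then have d: "(vdiff k u has_derivative (\<lambda>h. h *\<^sub>R vdiff (Suc k) u x)) (at x)"
    by (simp add: has_vector_derivative_def)
  have "(\<lambda>h. inner (vdiff k u x) (h *\<^sub>R vdiff (Suc k) u x) + inner (h *\<^sub>R vdiff (Suc k) u x) (vdiff k u x))
      = (*) (2 * inner (vdiff k u x) (vdiff (Suc k) u x))"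
    by (auto simp: fun_eq_iff inner_commute algebra_simps)
  with has_derivative_inner[OF d d]
  show "DERIV (\<lambda>t. inner (vdiff k u t) (vdiff k u t)) x :> 2 * inner (vdiff k u x) (vdiff (Suc k) u x)"
    by (simp add: has_field_derivative_def)
qed

text \<open>The derivatives of order \<open>< n\<close> have norm at most \<open>\<surd>energy\<close> and the equation bounds the
  \<open>n\<close>-th one by \<open>(1 + |lam| + M) \<surd>energy\<close>; Cauchy-Schwarz then bounds each term of the derivative.\<close>

lemma energy_derivative_bound:
  assumes sol: "is_sol n p lam u" and "2 \<le> n" and M: "(\<Sum>j\<le>n-2. cmod (p j x)) \<le> M"
  shows "\<bar>\<Sum>k<n. 2 * inner (vdiff k u x) (vdiff (Suc k) u x)\<bar> \<le> 2 * n * (1 + cmod lam + M) * energy n u x"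
proof -
  define s where "s = sqrt (energy n u x)"
  define K where "K = 1 + cmod lam + M"
  have E_nonneg: "energy n u x \<ge> 0" by (auto simp: energy_def intro!: sum_nonneg)
  have "0 \<le> (\<Sum>j\<le>n-2. cmod (p j x))" by (auto intro: sum_nonneg)
  then have K1: "1 \<le> K" using M by (simp add: K_def)
  have s0: "0 \<le> s" using E_nonneg by (simp add: s_def)
  have low: "norm (vdiff k u x) \<le> s" if "k < n" for k
  proof -
    have "(norm (vdiff k u x))\<^sup>2 \<le> energy n u x"
      unfolding energy_def by (rule member_le_sum) (use that in auto)
    then show ?thesis unfolding s_def by (rule real_le_rsqrt)
  qed
  have top: "norm (vdiff n u x) \<le> K * s"
  proof -
    have "vdiff n u x = lam * u x - (\<Sum>j\<le>n-2. p j x * vdiff j u x)"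
      using sol by (simp add: is_sol_def eq_diff_eq)
    then have "norm (vdiff n u x) \<le> norm (lam * vdiff 0 u x) + norm (\<Sum>j\<le>n-2. p j x * vdiff j u x)"
      by (metis norm_triangle_ineq4 vdiff.simps(1))
    also have "\<dots> \<le> cmod lam * s + (\<Sum>j\<le>n-2. cmod (p j x) * s)"
    proof (rule add_mono)
      show "norm (lam * vdiff 0 u x) \<le> cmod lam * s"
        using low[of 0] \<open>2 \<le> n\<close> by (simp add: norm_mult mult_left_mono)
      have "norm (\<Sum>j\<le>n-2. p j x * vdiff j u x) \<le> (\<Sum>j\<le>n-2. norm (p j x * vdiff j u x))"
        by (rule norm_sum)
      also have "\<dots> \<le> (\<Sum>j\<le>n-2. cmod (p j x) * s)"
        using low \<open>2 \<le> n\<close> by (auto intro!: sum_mono simp: norm_mult mult_left_mono)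
      finally show "norm (\<Sum>j\<le>n-2. p j x * vdiff j u x) \<le> (\<Sum>j\<le>n-2. cmod (p j x) * s)" .
    qed
    also have "\<dots> = (cmod lam + (\<Sum>j\<le>n-2. cmod (p j x))) * s"
      by (simp add: sum_distrib_right distrib_right)
    also have "\<dots> \<le> K * s"
      using M s0 unfolding K_def by (intro mult_right_mono) auto
    finally show ?thesis .
  qed
  have high: "norm (vdiff (Suc k) u x) \<le> K * s" if "k < n" for k
  proof (cases "Suc k < n")
    case True
    then have "norm (vdiff (Suc k) u x) \<le> s" by (rule low)
    also have "\<dots> \<le> K * s" using K1 s0 by (simp add: mult_le_cancel_right1)
    finally show ?thesis .
  next
    case False
    then have "Suc k = n" using that by simp
    then show ?thesis using top by simp
  qed
  have "\<bar>\<Sum>k<n. 2 * inner (vdiff k u x) (vdiff (Suc k) u x)\<bar> \<le> (\<Sum>k<n. 2 * (s * (K * s)))"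
  proof (rule order_trans[OF sum_abs sum_mono])
    fix k assume "k \<in> {..<n}"
    then have "norm (vdiff k u x) * norm (vdiff (Suc k) u x) \<le> s * (K * s)"
      using low high s0 by (auto intro!: mult_mono)
    then show "\<bar>2 * inner (vdiff k u x) (vdiff (Suc k) u x)\<bar> \<le> 2 * (s * (K * s))"
      using Cauchy_Schwarz_ineq2[of "vdiff k u x" "vdiff (Suc k) u x"] by simp
  qed
  also have "\<dots> = 2 * n * K * (s * s)"
    by (simp add: algebra_simps)
  also have "s * s = energy n u x"
    using E_nonneg by (simp add: s_def)
  finally show ?thesis by (simp add: K_def)
qed

global_interpretation cfun: vector_space "\<lambda>(c::complex) (v::'a \<Rightarrow> complex) x. c * v x"
  by unfold_locales (simp_all add: fun_eq_iff algebra_simps)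

lemma sum_fun_apply: "(\<Sum>i\<in>I. f i) x = (\<Sum>i\<in>I. f i x)"
  by (induction I rule: infinite_finite_induct) auto

lemma cfun_family_dependent:
  fixes w :: "'i \<Rightarrow> 'a \<Rightarrow> complex"
  assumes "finite I" "finite S" "card S < card I" "w ` I \<subseteq> cfun.span S"
  shows "\<exists>c. (\<exists>j\<in>I. c j \<noteq> 0) \<and> (\<forall>x. (\<Sum>j\<in>I. c j * w j x) = 0)"
proof (cases "inj_on w I")
  case False
  then obtain i j where ij: "i \<in> I" "j \<in> I" "i \<noteq> j" "w i = w j"
    unfolding inj_on_def by auto
  define c where "c t = (if t = i then 1 else if t = j then -1 else (0::complex))" for t
  have "(\<Sum>t\<in>I. c t * w t x) = (\<Sum>t\<in>I. (if t = i then w i x else 0) - (if t = j then w j x else 0))"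
    for x by (rule sum.cong) (use ij in \<open>auto simp: c_def\<close>)
  then have "(\<Sum>t\<in>I. c t * w t x) = 0" for x
    using ij assms(1) by (simp add: sum_subtractf)
  then show ?thesis
    using ij by (intro exI[of _ c]) (auto simp: c_def)
next
  case True
  then have "card (w ` I) = card I" by (rule card_image)
  then have "cfun.dependent (w ` I)"
    using cfun.independent_span_bound[OF assms(2) _ assms(4)] assms(3) by fastforce
  then obtain u where u: "\<exists>v\<in>w ` I. u v \<noteq> 0" "(\<Sum>v\<in>w ` I. (\<lambda>x. u v * v x)) = 0"
    using cfun.dependent_finite[of "w ` I"] assms(1) by auto
  have "(\<Sum>j\<in>I. u (w j) * w j x) = 0" for x
    using fun_cong[OF u(2), of x] by (simp add: sum_fun_apply sum.reindex[OF True])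
  then show ?thesis using u(1) by (intro exI[of _ "u \<circ> w"]) auto
qed

lemma supported_vectors_dependent:
  fixes w :: "nat \<Rightarrow> nat \<Rightarrow> complex"
  assumes "\<And>j k. n \<le> k \<Longrightarrow> w j k = 0"
  shows "\<exists>c. (\<exists>j\<le>n. c j \<noteq> 0) \<and> (\<forall>k. (\<Sum>j\<le>n. c j * w j k) = 0)"
proof -
  define e where "e k = (\<lambda>t::nat. if t = k then 1 else (0::complex))" for k :: nat
  have "w j \<in> cfun.span (e ` {..<n})" for j
  proof -
    have "w j = (\<Sum>k<n. (\<lambda>t. w j k * e k t))"
    proof
      fix t
      show "w j t = (\<Sum>k<n. (\<lambda>t. w j k * e k t)) t"
        unfolding sum_fun_apply e_def using assms by (cases "t < n") (auto simp: if_distrib cong: if_cong)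
    qed
    also have "\<dots> \<in> cfun.span (e ` {..<n})"
      by (intro cfun.span_sum cfun.span_scale[where c = "w j _", simplified] cfun.span_base) auto
    finally show ?thesis .
  qed
  moreover have "card (e ` {..<n}) < card {..n}"
    using card_image_le[of "{..<n}" e] by simp
  ultimately show ?thesis
    using cfun_family_dependent[of "{..n}" "e ` {..<n}" w] by auto
qed

lemma cfun_enum_independent:
  fixes \<psi> :: "nat \<Rightarrow> 'a \<Rightarrow> complex"
  assumes bij: "bij_betw \<psi> {..<m} B" and ind: "cfun.independent B"
    and zero: "\<And>x. (\<Sum>i<m. c i * \<psi> i x) = 0" and "i < m"
  shows "c i = 0"
proof -
  define u where "u v = c (the_inv_into {..<m} \<psi> v)" for v
  have u: "u (\<psi> j) = c j" if "j < m" for j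
    using bij that by (simp add: u_def bij_betw_def the_inv_into_f_f)
  have "(\<Sum>v\<in>B. (\<lambda>x. u v * v x)) = (\<Sum>j<m. (\<lambda>x. u (\<psi> j) * \<psi> j x))"
    by (rule sum.reindex_bij_betw[OF bij, symmetric])
  also have "\<dots> = 0"
    using zero u by (simp add: fun_eq_iff sum_fun_apply)
  moreover have "finite B" using bij_betw_finite[OF bij] by simp
  ultimately have "\<forall>v\<in>B. u v = 0"
    using ind cfun.dependent_finite[of B] by auto
  then show ?thesis
    using u \<open>i < m\<close> bij by (metis bij_betwE lessThan_iff)
qed

lemma cfun_enum_span:
  fixes \<psi> :: "nat \<Rightarrow> 'a \<Rightarrow> complex"
  assumes bij: "bij_betw \<psi> {..<m} B" and w: "w \<in> cfun.span B"
  shows "\<exists>c. \<forall>x. w x = (\<Sum>i<m. c i * \<psi> i x)"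
proof -
  obtain u where "w = (\<Sum>v\<in>B. (\<lambda>x. u v * v x))"
    using w cfun.span_finite bij_betw_finite[OF bij] by auto
  also have "\<dots> = (\<Sum>i<m. (\<lambda>x. u (\<psi> i) * \<psi> i x))"
    by (rule sum.reindex_bij_betw[OF bij, symmetric])
  finally show ?thesis
    by (intro exI[of _ "u \<circ> \<psi>"]) (simp add: sum_fun_apply)
qed

lemma smooth_fun_continuous: "smooth_fun f \<Longrightarrow> continuous_on UNIV f"
  unfolding smooth_fun_def
  by (metis vdiff.simps(1) continuous_at_imp_continuous_on differentiable_imp_continuous_within)

locale continuous_coeff_ode =
  fixes n :: nat and p :: "nat \<Rightarrow> real \<Rightarrow> complex"
  assumes order_ge_2: "2 \<le> n"
    and coeff_continuous: "\<And>k. k \<le> n - 2 \<Longrightarrow> continuous_on UNIV (p k)"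
begin

lemma sol_eq_0_if_initial_0:
  assumes sol: "is_sol n p lam u" and init: "\<And>k. k < n \<Longrightarrow> vdiff k u 0 = 0"
  shows "u x = 0"
proof -
  define R where "R = \<bar>x\<bar>"
  have "continuous_on {-R..R} (p j)" if "j \<le> n - 2" for j
    using continuous_on_subset[OF coeff_continuous[OF that]] by blast
  then have "continuous_on {-R..R} (\<lambda>t. \<Sum>j\<le>n-2. cmod (p j t))"
    by (intro continuous_on_sum continuous_on_norm) auto
  then have "bounded ((\<lambda>t. \<Sum>j\<le>n-2. cmod (p j t)) ` {-R..R})"
    by (intro compact_imp_bounded compact_continuous_image) auto
  then obtain M where "\<And>t. t \<in> {-R..R} \<Longrightarrow> \<bar>\<Sum>j\<le>n-2. cmod (p j t)\<bar> \<le> M"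
    unfolding bounded_iff by (auto simp del: atLeastAtMost_iff)
  then have M: "\<And>t. t \<in> {-R..R} \<Longrightarrow> (\<Sum>j\<le>n-2. cmod (p j t)) \<le> M"
    using abs_le_D1 by blast
  have diff: "\<And>k t. k < n \<Longrightarrow> vdiff k u differentiable (at t)"
    using sol by (auto simp: is_sol_def)
  have "energy n u x = 0"
  proof (rule gronwall_zero[of "energy n u"])
    show "\<And>t. 0 \<le> energy n u t" by (auto simp: energy_def intro: sum_nonneg)
    show "energy n u 0 = 0" using init by (simp add: energy_def)
    show "\<And>t. DERIV (energy n u) t :> (\<Sum>k<n. 2 * inner (vdiff k u t) (vdiff (Suc k) u t))"
      using diff energy_has_derivative by blast
    show "\<And>t. t \<in> {-R..R} \<Longrightarrow>
        \<bar>\<Sum>k<n. 2 * inner (vdiff k u t) (vdiff (Suc k) u t)\<bar> \<le> 2 * real n * (1 + cmod lam + M) * energy n u t"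
      using energy_derivative_bound[OF sol order_ge_2 M] .
  qed (auto simp: R_def)
  moreover have "(norm (vdiff 0 u x))\<^sup>2 \<le> energy n u x"
    unfolding energy_def by (rule member_le_sum) (use order_ge_2 in auto)
  ultimately show ?thesis by simp
qed

lemma sols_linearly_dependent:
  assumes "\<And>j. j \<le> n \<Longrightarrow> is_sol n p lam (f j)"
  shows "\<exists>c. (\<exists>j\<le>n. c j \<noteq> 0) \<and> (\<forall>x. (\<Sum>j\<le>n. c j * f j x) = 0)"
proof -
  obtain c where c: "\<exists>j\<le>n. c j \<noteq> 0"
    and init: "\<And>k. (\<Sum>j\<le>n. c j * (if k < n then vdiff k (f j) 0 else 0)) = 0"
    using supported_vectors_dependent[of n "\<lambda>j k. if k < n then vdiff k (f j) 0 else 0"] by auto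
  have sol: "is_sol n p lam (\<lambda>x. \<Sum>j\<le>n. c j * f j x)"
    using assms by (intro is_sol_sum) auto
  have "vdiff k (\<lambda>x. \<Sum>j\<le>n. c j * f j x) 0 = 0" if "k < n" for k
  proof -
    have "vdiff k (\<lambda>x. \<Sum>j\<le>n. c j * f j x) = (\<lambda>x. \<Sum>j\<le>n. c j * vdiff k (f j) x)"
      by (rule vdiff_sum) (use assms that in \<open>auto simp: is_sol_def\<close>)
    then show ?thesis using init[of k] that by simp
  qed
  then show ?thesis
    using c sol_eq_0_if_initial_0[OF sol] by blast
qed

lemma independent_sols_card:
  assumes ind: "cfun.independent B" and sols: "\<And>v. v \<in> B \<Longrightarrow> is_sol n p lam v"
  shows "finite B \<and> card B \<le> n"
proof (rule ccontr)
  assume "\<not> (finite B \<and> card B \<le> n)"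
  then obtain F where F: "F \<subseteq> B" "finite F" "card F = Suc n"
    by (metis infinite_arbitrarily_large not_less_eq_eq obtain_subset_with_card_n)
  then obtain h where h: "bij_betw h {..<Suc n} F"
    using ex_bij_betw_nat_finite[of F] by (auto simp: atLeast0LessThan)
  have "is_sol n p lam (h j)" if "j \<le> n" for j
    using bij_betwE[OF h] that F(1) sols by (meson le_imp_less_Suc lessThan_iff subsetD)
  then obtain c where c: "\<exists>j\<le>n. c j \<noteq> 0" "\<forall>x. (\<Sum>j\<le>n. c j * h j x) = 0"
    using sols_linearly_dependent by blast
  have "c j = 0" if "j \<le> n" for j
    using cfun_enum_independent[OF h cfun.independent_mono[OF ind F(1)]] c(2) that
    by (simp add: lessThan_Suc_atMost)
  then show False using c(1) by blast
qed

end

lemma lattice_zeros_propagate: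
  assumes q: "q \<noteq> 0" "degree q \<le> n" and annih: "poly_shift b q u = (\<lambda>x. 0)"
    and zeros: "\<And>j. j < n \<Longrightarrow> u (real j * b) = 0"
  shows "u (real k * b) = 0"
proof (induction k rule: less_induct)
  case (less k)
  show ?case
  proof (cases "k < n")
    case True
    then show ?thesis by (rule zeros)
  next
    case False
    define d where "d = degree q"
    define m where "m = k - d"
    have k: "k = m + d" using False q(2) by (simp add: m_def d_def)
    have "0 = poly_shift b q u (real m * b)" using annih by simp
    also have "\<dots> = (\<Sum>i<d. coeff q i * u (real (m + i) * b)) + coeff q d * u (real k * b)"
      by (simp add: poly_shift_def d_def k algebra_simps flip: lessThan_Suc_atMost)
    also have "(\<Sum>i<d. coeff q i * u (real (m + i) * b)) = 0"
    proof (intro sum.neutral ballI)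
      fix i assume "i \<in> {..<d}"
      then have "m + i < k" using k by simp
      then have "u (real (m + i) * b) = 0" by (rule less.IH)
      then show "coeff q i * u (real (m + i) * b) = 0" by simp
    qed
    finally have "coeff q d * u (real k * b) = 0" by simp
    moreover have "coeff q d \<noteq> 0" using q(1) by (simp add: d_def)
    ultimately show ?thesis by simp
  qed
qed

lemma floquet_rank_ge_1: "floquet n p b lam r l u \<Longrightarrow> 1 \<le> l"
  by (induction rule: floquet.induct) auto

lemma floquet_if_annihilated:
  assumes periodic: "\<And>k x. k \<le> n - 2 \<Longrightarrow> p k (x + b) = p k x"
  shows "is_sol n p lam u \<Longrightarrow> u \<noteq> (\<lambda>x. 0) \<Longrightarrow> poly_shift b ([:-r, 1:] ^ k) u = (\<lambda>x. 0)
    \<Longrightarrow> \<exists>l. floquet n p b lam r l u"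
proof (induction k arbitrary: u)
  case 0
  then show ?case by simp
next
  case (Suc k)
  define v where "v = poly_shift b [:-r, 1:] u"
  have step: "u (x + b) = r * u x + v x" for x
    by (simp add: v_def poly_shift_linear)
  show ?case
  proof (cases "v = (\<lambda>x. 0)")
    case True
    then show ?thesis using Suc.prems step by (auto intro: floquet.rank1)
  next
    case False
    have "is_sol n p lam v"
      unfolding v_def using Suc.prems(1) periodic by (rule is_sol_poly_shift)
    moreover have "poly_shift b ([:-r, 1:] ^ k) v = (\<lambda>x. 0)"
      using Suc.prems(3) by (simp add: v_def flip: poly_shift_mult power_Suc2)
    ultimately obtain l where "floquet n p b lam r l v"
      using Suc.IH False by blast
    then show ?thesis
      using floquet.rankSuc[OF Suc.prems(1) _ floquet_rank_ge_1] step by blast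
  qed
qed

lemma coprime_linear_power:
  fixes s :: "complex poly"
  assumes "\<not> [:-r, 1:] dvd s"
  shows "coprime ([:-r, 1:] ^ m) s"
  using assms prime_elem_imp_coprime[OF prime_elem_linear_field_poly[of 1 "-r"]] by simp

lemma poly_shift_coprime_decomp:
  assumes "coprime L s" and annih: "poly_shift b (L * s) w = (\<lambda>x. 0)"
  obtains q1 q2 where "w = poly_shift b q1 w + poly_shift b q2 w"
    and "poly_shift b L (poly_shift b q1 w) = (\<lambda>x. 0)"
    and "poly_shift b s (poly_shift b q2 w) = (\<lambda>x. 0)"
proof -
  obtain a c where bezout: "a * L + c * s = 1"
    using \<open>coprime L s\<close> bezout_coefficients_fst_snd[of L s] by (metis coprime_imp_gcd_eq_1)
  show ?thesis
  proof (rule that)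
    show "w = poly_shift b (c * s) w + poly_shift b (a * L) w"
      using poly_shift_add[of b "c * s" "a * L" w] by (simp add: fun_eq_iff bezout add.commute)
    have "poly_shift b L (poly_shift b (c * s) w) = poly_shift b c (poly_shift b (L * s) w)"
      by (simp only: mult.left_commute flip: poly_shift_mult)
    then show "poly_shift b L (poly_shift b (c * s) w) = (\<lambda>x. 0)"
      using annih by simp
    have "poly_shift b s (poly_shift b (a * L) w) = poly_shift b a (poly_shift b (L * s) w)"
      by (simp only: mult.left_commute mult.commute[of s L] flip: poly_shift_mult)
    then show "poly_shift b s (poly_shift b (a * L) w) = (\<lambda>x. 0)"
      using annih by simp
  qed
qed

definition root_vectors :: "nat \<Rightarrow> (nat \<Rightarrow> real \<Rightarrow> complex) \<Rightarrow> real \<Rightarrow> complex \<Rightarrow> (real \<Rightarrow> complex) set" where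
  "root_vectors n p b lam = {w \<in> eigspace n p b lam. \<exists>r k. poly_shift b ([:-r, 1:] ^ k) w = (\<lambda>x. 0)}"

locale periodic_ode = continuous_coeff_ode +
  fixes b :: real
  assumes coeff_periodic: "\<And>k x. k \<le> n - 2 \<Longrightarrow> p k (x + b) = p k x"
begin

lemma sol_annihilated_by_poly_shift:
  assumes sol: "is_sol n p lam u"
  obtains q where "q \<noteq> 0" "degree q \<le> n" "poly_shift b q u = (\<lambda>x. 0)"
proof -
  have "is_sol n p lam (\<lambda>x. u (x + real j * b))" for j
    using sol coeff_periodic by (intro is_sol_shift periodic_shift_multiple) auto
  then obtain c where c: "\<exists>j\<le>n. c j \<noteq> 0" "\<forall>x. (\<Sum>j\<le>n. c j * u (x + real j * b)) = 0"
    using sols_linearly_dependent[where f = "\<lambda>j x. u (x + real j * b)"] by blast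
  define q where "q = (\<Sum>j\<le>n. monom (c j) j)"
  have coeff_q: "coeff q i = (if i \<le> n then c i else 0)" for i
    unfolding q_def coeff_sum by (simp add: sum.delta' cong: if_cong)
  then have "degree q \<le> n" by (intro degree_le) simp
  moreover have "q \<noteq> 0" using c(1) coeff_q by (metis coeff_0)
  moreover have "poly_shift b q u x = 0" for x
    using c(2) by (simp add: poly_shift_eq_sum[OF \<open>degree q \<le> n\<close>] coeff_q)
  ultimately show ?thesis using that by blast
qed

lemma eigspace_vanishes_on_lattice:
  assumes "u \<in> eigspace n p b lam"
  shows "u (real k * b) = 0"
proof -
  from assms have sol: "is_sol n p lam u" and zeros: "\<And>j. j < n \<Longrightarrow> u (real j * b) = 0"
    by (auto simp: eigspace_def)
  obtain q where "q \<noteq> 0" "degree q \<le> n" "poly_shift b q u = (\<lambda>x. 0)"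
    using sol_annihilated_by_poly_shift[OF sol] .
  from lattice_zeros_propagate[OF this zeros] show ?thesis .
qed

lemma poly_shift_in_eigspace:
  assumes u: "u \<in> eigspace n p b lam"
  shows "poly_shift b q u \<in> eigspace n p b lam"
proof -
  have "poly_shift b q u (real j * b) = (\<Sum>i\<le>degree q. coeff q i * u (real (j + i) * b))" for j
    by (simp add: poly_shift_def algebra_simps)
  then have "poly_shift b q u (real j * b) = 0" for j
    using eigspace_vanishes_on_lattice[OF u] by (simp del: of_nat_add)
  moreover have "is_sol n p lam (poly_shift b q u)"
    using u coeff_periodic by (intro is_sol_poly_shift) (auto simp: eigspace_def)
  ultimately show ?thesis by (simp add: eigspace_def)
qed

text \<open>Primary decomposition: split off one root of an annihilating polynomial at a time.\<close>

lemma eigspace_in_span_root_vectors: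
  assumes "w \<in> eigspace n p b lam" "q \<noteq> 0" "poly_shift b q w = (\<lambda>x. 0)"
  shows "w \<in> cfun.span (root_vectors n p b lam)"
  using assms
proof (induction "degree q" arbitrary: q w rule: less_induct)
  case less
  show ?case
  proof (cases "degree q = 0")
    case True
    then obtain a where "q = [:a:]" "a \<noteq> 0" using less.prems(2) by (metis degree_eq_zeroE pCons_0_0)
    then have "w = 0" using less.prems(3) by (auto simp: fun_eq_iff poly_shift_const dest: fun_cong)
    then show ?thesis by (simp add: cfun.span_zero)
  next
    case False
    then obtain r where "poly q r = 0"
      using fundamental_theorem_of_algebra[of q] constant_degree[of q] by auto
    then obtain m s where qs: "q = [:-r, 1:] ^ m * s" and m: "m \<noteq> 0" and "\<not> [:-r, 1:] dvd s"
      using order_decomp[OF less.prems(2), of r] order_root less.prems(2) by blast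
    from \<open>\<not> [:-r, 1:] dvd s\<close> have "coprime ([:-r, 1:] ^ m) s" by (rule coprime_linear_power)
    then obtain q1 q2 where w: "w = poly_shift b q1 w + poly_shift b q2 w"
      and ann1: "poly_shift b ([:-r, 1:] ^ m) (poly_shift b q1 w) = (\<lambda>x. 0)"
      and ann2: "poly_shift b s (poly_shift b q2 w) = (\<lambda>x. 0)"
      using poly_shift_coprime_decomp less.prems(3) qs by metis
    have "poly_shift b q1 w \<in> root_vectors n p b lam"
      using ann1 poly_shift_in_eigspace[OF less.prems(1)] by (auto simp: root_vectors_def)
    moreover have "poly_shift b q2 w \<in> cfun.span (root_vectors n p b lam)"
    proof (rule less.hyps[OF _ poly_shift_in_eigspace[OF less.prems(1)] _ ann2])
      show "s \<noteq> 0" using less.prems(2) qs by auto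
      then show "degree s < degree q" using m by (simp add: qs degree_mult_eq degree_power_eq)
    qed
    ultimately show ?thesis
      using w cfun.span_add[OF cfun.span_base] by metis
  qed
qed

lemma eigspace_floquet_basis:
  "\<exists>(m::nat) \<psi>. (\<forall>i<m. \<psi> i \<in> eigspace n p b lam \<and> (\<exists>r l. floquet n p b lam r l (\<psi> i))) \<and>
     (\<forall>c. (\<forall>x. (\<Sum>i<m. c i * \<psi> i x) = 0) \<longrightarrow> (\<forall>i<m. c i = 0)) \<and>
     (\<forall>u\<in>eigspace n p b lam. \<exists>c. \<forall>x. u x = (\<Sum>i<m. c i * \<psi> i x))"
proof -
  let ?R = "root_vectors n p b lam"
  obtain B where B: "B \<subseteq> ?R" "cfun.independent B" "?R \<subseteq> cfun.span B"
    using cfun.maximal_independent_subset by blast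
  have B_eig: "B \<subseteq> eigspace n p b lam" using B(1) by (auto simp: root_vectors_def)
  then have "finite B"
    using independent_sols_card[OF B(2)] by (auto simp: eigspace_def)
  then obtain \<psi> where \<psi>: "bij_betw \<psi> {..<card B} B"
    using ex_bij_betw_nat_finite by (auto simp: atLeast0LessThan)
  have "\<psi> i \<in> eigspace n p b lam \<and> (\<exists>r l. floquet n p b lam r l (\<psi> i))" if "i < card B" for i
  proof -
    have "\<psi> i \<in> B" using \<psi> that by (auto dest: bij_betwE)
    then have "\<psi> i \<noteq> (\<lambda>x. 0)"
      using B(2) cfun.dependent_zero by (force simp: zero_fun_def)
    moreover obtain r k where "poly_shift b ([:-r, 1:] ^ k) (\<psi> i) = (\<lambda>x. 0)"
      using \<open>\<psi> i \<in> B\<close> B(1) by (auto simp: root_vectors_def)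
    moreover have eig: "\<psi> i \<in> eigspace n p b lam" using \<open>\<psi> i \<in> B\<close> B_eig by blast
    moreover from eig have "is_sol n p lam (\<psi> i)" by (simp add: eigspace_def)
    ultimately show ?thesis
      using floquet_if_annihilated[of n p b lam, OF coeff_periodic] by blast
  qed
  moreover have "\<forall>c. (\<forall>x. (\<Sum>i<card B. c i * \<psi> i x) = 0) \<longrightarrow> (\<forall>i<card B. c i = 0)"
    using cfun_enum_independent[OF \<psi> B(2)] by blast
  moreover have "u \<in> cfun.span B" if u: "u \<in> eigspace n p b lam" for u
  proof -
    have "is_sol n p lam u" using u by (simp add: eigspace_def)
    then obtain q where "q \<noteq> 0" "poly_shift b q u = (\<lambda>x. 0)"
      by (rule sol_annihilated_by_poly_shift)
    then have "u \<in> cfun.span ?R" using eigspace_in_span_root_vectors u by blast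
    with cfun.span_minimal[OF B(3) cfun.subspace_span] show ?thesis by blast
  qed
  then have "\<forall>u\<in>eigspace n p b lam. \<exists>c. \<forall>x. u x = (\<Sum>i<card B. c i * \<psi> i x)"
    using cfun_enum_span[OF \<psi>] by blast
  ultimately show ?thesis by blast
qed

lemma floquet_predecessor_in_eigspace:
  assumes "\<psi> \<in> eigspace n p b lam" "\<And>x. \<psi> (x + b) = r * \<psi> x + \<phi> x"
  shows "\<phi> \<in> eigspace n p b lam"
proof -
  have "\<phi> = poly_shift b [:-r, 1:] \<psi>"
    using assms(2) by (simp add: fun_eq_iff poly_shift_linear)
  then show ?thesis using poly_shift_in_eigspace[OF assms(1)] by simp
qed

end

theorem theorem3:
  fixes n :: nat and b :: real and p :: "nat \<Rightarrow> real \<Rightarrow> complex" and \<mu> :: complex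
  assumes n2: "n \<ge> 2" and bpos: "b > 0"
    and psmooth: "\<forall>k\<le>n-2. smooth_fun (p k)"
    and pper: "\<forall>k\<le>n-2. \<forall>x. p k (x + b) = p k x"
    and eig: "\<exists>u\<in>eigspace n p b \<mu>. u \<noteq> (\<lambda>x. 0)"
  shows "(\<exists>m::nat. \<exists>\<psi>::nat \<Rightarrow> real \<Rightarrow> complex.
            (\<forall>i<m. \<psi> i \<in> eigspace n p b \<mu> \<and> (\<exists>r l. floquet n p b \<mu> r l (\<psi> i))) \<and>
            (\<forall>c::nat \<Rightarrow> complex. (\<forall>x. (\<Sum>i<m. c i * \<psi> i x) = 0) \<longrightarrow> (\<forall>i<m. c i = 0)) \<and>
            (\<forall>u\<in>eigspace n p b \<mu>. \<exists>c::nat \<Rightarrow> complex. \<forall>x. u x = (\<Sum>i<m. c i * \<psi> i x)))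
       \<and> (\<forall>r l \<psi> \<phi>. l \<ge> 2 \<and> floquet n p b \<mu> r l \<psi> \<and> \<psi> \<in> eigspace n p b \<mu> \<and>
            floquet n p b \<mu> r (l - 1) \<phi> \<and> (\<forall>x. \<psi> (x + b) = r * \<psi> x + \<phi> x)
            \<longrightarrow> \<phi> \<in> eigspace n p b \<mu>)"
proof -
  interpret periodic_ode n p b
    using n2 psmooth pper by unfold_locales (auto intro: smooth_fun_continuous)
  show ?thesis
    using eigspace_floquet_basis floquet_predecessor_in_eigspace by blast
qed

end
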